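(* Let $k$ be a field of characteristic different from $2$ and $3$, and let $\mathcal{H}$ be a K-Hopf loop over $k$ (defined in the context), with product $\cdot$, unit $1$, coproduct $\Delta a=a_{(1)}\otimes a_{(2)}$ (Sweedler notation), counit $\epsilon$ and antipode $S$. Then for all $a,b\in\mathcal{H}$: $$a_{(1)}\cdot(a_{(2)}\cdot b)=(a_{(1)}\cdot a_{(2)})\cdot b,$$ $$S(a_{(1)})\cdot a_{(2)}=a_{(1)}\cdot S(a_{(2)}).$$
   Context: A K-Hopf loop over a field $k$ (of characteristic $\neq 2,3$) is a unital (not necessarily associative) algebra $\mathcal{H}$ with product $\cdot$ and unit $1$, equipped with algebra homomorphisms $\Delta:\mathcal{H}\to\mathcal{H}\otimes\mathcal{H}$ and $\epsilon:\mathcal{H}\to k$ making $\mathcal{H}$ a coassociative counital coalgebra, and a linear map $S:\mathcal{H}\to\mathcal{H}$, such that, writing $\Delta a=a_{(1)}\otimes a_{(2)}$, for all $a,b,c\in\mathcal{H}$: (i) $a_{(1)}\cdot(b\cdot(a_{(2)}\cdot c))=(a_{(1)}\cdot(b\cdot a_{(2)}))\cdot c$; (ii) $a_{(1)}\cdot(S(a_{(2)})\cdot b)=\epsilon(a)\,b=S(a_{(1)})\cdot(a_{(2)}\cdot b)$; (iii) $S(a\cdot b)=S(a)\cdot S(b)$; (iv) $\Delta(S(a))=S(a_{(1)})\otimes S(a_{(2)})$. *)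

theory Defs
  imports Complex_Main
begin

text \<open>An element of H (x) H is represented by a finite list of pure tensors
  [(x1,y1),...,(xn,yn)] standing for x1 (x) y1 + ... + xn (x) yn.
  sw F t evaluates a map F that is bilinear in its two arguments on such a
  representative (well defined on the tensor product when F is bilinear).\<close>

definition sw :: "('h \<Rightarrow> 'h \<Rightarrow> 'b::comm_monoid_add) \<Rightarrow> ('h \<times> 'h) list \<Rightarrow> 'b" where
  "sw F t = sum_list (map (\<lambda>(x, y). F x y) t)"

definition lfun :: "('k::field \<Rightarrow> 'h::ab_group_add \<Rightarrow> 'h) \<Rightarrow> ('h \<Rightarrow> 'k) \<Rightarrow> bool" where
  "lfun sc f \<longleftrightarrow> Vector_Spaces.linear sc (*) f"

text \<open>Equality of two elements of H (x) H. Over a field, H* (x) H* separates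
  points of H (x) H, so two tensors are equal iff all pairings with f (x) g agree.\<close>
definition teq2 :: "('k::field \<Rightarrow> 'h::ab_group_add \<Rightarrow> 'h) \<Rightarrow> ('h \<times> 'h) list \<Rightarrow> ('h \<times> 'h) list \<Rightarrow> bool" where
  "teq2 sc t u \<longleftrightarrow> (\<forall>f g. lfun sc f \<longrightarrow> lfun sc g \<longrightarrow>
      sw (\<lambda>x y. f x * g y) t = sw (\<lambda>x y. f x * g y) u)"

definition bilinear_op :: "('k::field \<Rightarrow> 'h::ab_group_add \<Rightarrow> 'h) \<Rightarrow> ('h \<Rightarrow> 'h \<Rightarrow> 'h) \<Rightarrow> bool" where
  "bilinear_op sc m \<longleftrightarrow> (\<forall>a. Vector_Spaces.linear sc sc (m a)) \<and> (\<forall>b. Vector_Spaces.linear sc sc (\<lambda>a. m a b))"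

definition khopf_loop ::
  "('k::field \<Rightarrow> 'h::ab_group_add \<Rightarrow> 'h) \<Rightarrow> ('h \<Rightarrow> 'h \<Rightarrow> 'h) \<Rightarrow> 'h \<Rightarrow>
   ('h \<Rightarrow> ('h \<times> 'h) list) \<Rightarrow> ('h \<Rightarrow> 'k) \<Rightarrow> ('h \<Rightarrow> 'h) \<Rightarrow> bool" where
  "khopf_loop sc m one D e S \<longleftrightarrow>
     vector_space sc \<and>
     \<comment> \<open>unital (nonassociative) algebra\<close>
     bilinear_op sc m \<and> (\<forall>a. m one a = a \<and> m a one = a) \<and>
     \<comment> \<open>D is a linear map H -> H (x) H\<close>
     (\<forall>f g. lfun sc f \<longrightarrow> lfun sc g \<longrightarrow> lfun sc (\<lambda>a. sw (\<lambda>x y. f x * g y) (D a))) \<and>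
     \<comment> \<open>D is an algebra homomorphism\<close>
     (\<forall>a b. teq2 sc (D (m a b)) [(m x u, m y v). (x, y) \<leftarrow> D a, (u, v) \<leftarrow> D b]) \<and>
     teq2 sc (D one) [(one, one)] \<and>
     \<comment> \<open>e is an algebra homomorphism H -> k\<close>
     lfun sc e \<and> (\<forall>a b. e (m a b) = e a * e b) \<and> e one = 1 \<and>
     \<comment> \<open>coassociativity: (D (x) id) D = (id (x) D) D, tested against f (x) g (x) h\<close>
     (\<forall>f g h a. lfun sc f \<longrightarrow> lfun sc g \<longrightarrow> lfun sc h \<longrightarrow>
        sw (\<lambda>x y. sw (\<lambda>u v. f u * g v) (D x) * h y) (D a) =
        sw (\<lambda>x y. f x * sw (\<lambda>u v. g u * h v) (D y)) (D a)) \<and>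
     \<comment> \<open>counit\<close>
     (\<forall>a. sw (\<lambda>x y. sc (e x) y) (D a) = a \<and> sw (\<lambda>x y. sc (e y) x) (D a) = a) \<and>
     \<comment> \<open>S is linear\<close>
     Vector_Spaces.linear sc sc S \<and>
     \<comment> \<open>(i)\<close>
     (\<forall>a b c. sw (\<lambda>x y. m x (m b (m y c))) (D a) = sw (\<lambda>x y. m (m x (m b y)) c) (D a)) \<and>
     \<comment> \<open>(ii)\<close>
     (\<forall>a b. sw (\<lambda>x y. m x (m (S y) b)) (D a) = sc (e a) b \<and>
            sw (\<lambda>x y. m (S x) (m y b)) (D a) = sc (e a) b) \<and>
     \<comment> \<open>(iii)\<close>
     (\<forall>a b. S (m a b) = m (S a) (S b)) \<and>
     \<comment> \<open>(iv)\<close>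
     (\<forall>a. teq2 sc (D (S a)) [(S x, S y). (x, y) \<leftarrow> D a])"

end

theory Submission
  imports Defs
begin

text \<open>Both identities are axioms (i) and (ii) specialised at \<open>b = 1\<close>: (i) becomes left
  alternativity, and both halves of (ii) become \<open>\<epsilon>(a) 1\<close>.\<close>

lemma sw_left_alternative_of_moufang:
  fixes m :: "'h \<Rightarrow> 'h \<Rightarrow> 'h::comm_monoid_add" and D :: "'h \<Rightarrow> ('h \<times> 'h) list"
  assumes unit_left: "\<And>a. m one a = a"
    and moufang: "\<And>a b c. sw (\<lambda>x y. m x (m b (m y c))) (D a) = sw (\<lambda>x y. m (m x (m b y)) c) (D a)"
  shows "sw (\<lambda>x y. m x (m y c)) (D a) = sw (\<lambda>x y. m (m x y) c) (D a)"
  using moufang[where a=a and b=one and c=c] by (simp only: unit_left)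

lemma sw_antipode_left_eq_right:
  fixes m :: "'h \<Rightarrow> 'h \<Rightarrow> 'h::comm_monoid_add" and D :: "'h \<Rightarrow> ('h \<times> 'h) list"
  assumes unit_right: "\<And>a. m a one = a"
    and antipode_right: "\<And>a b. sw (\<lambda>x y. m x (m (S y) b)) (D a) = sc (e a) b"
    and antipode_left: "\<And>a b. sw (\<lambda>x y. m (S x) (m y b)) (D a) = sc (e a) b"
  shows "sw (\<lambda>x y. m (S x) y) (D a) = sw (\<lambda>x y. m x (S y)) (D a)"
  using antipode_left[where a=a and b=one] antipode_right[where a=a and b=one]
  by (simp add: unit_right)

theorem proposition3p2:
  fixes sc :: "'k::field \<Rightarrow> 'h::ab_group_add \<Rightarrow> 'h"
    and m :: "'h \<Rightarrow> 'h \<Rightarrow> 'h" and one :: 'h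
    and D :: "'h \<Rightarrow> ('h \<times> 'h) list" and e :: "'h \<Rightarrow> 'k" and S :: "'h \<Rightarrow> 'h"
  assumes char2: "(2::'k) \<noteq> 0" and char3: "(3::'k) \<noteq> 0"
    and H: "khopf_loop sc m one D e S"
  shows "(\<forall>a b. sw (\<lambda>x y. m x (m y b)) (D a) = sw (\<lambda>x y. m (m x y) b) (D a)) \<and>
         (\<forall>a. sw (\<lambda>x y. m (S x) y) (D a) = sw (\<lambda>x y. m x (S y)) (D a))"
proof -
  from H have unit: "\<And>a. m one a = a" "\<And>a. m a one = a"
    and moufang: "\<And>a b c. sw (\<lambda>x y. m x (m b (m y c))) (D a) = sw (\<lambda>x y. m (m x (m b y)) c) (D a)"
    and antipode_right: "\<And>a b. sw (\<lambda>x y. m x (m (S y) b)) (D a) = sc (e a) b"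
    and antipode_left: "\<And>a b. sw (\<lambda>x y. m (S x) (m y b)) (D a) = sc (e a) b"
    unfolding khopf_loop_def by blast+
  show ?thesis
    by (intro conjI allI sw_left_alternative_of_moufang sw_antipode_left_eq_right)
      (fact unit moufang antipode_right antipode_left)+
qed

end
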